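(* Along every trajectory of the Physarum dynamics, for every edge $e$ that does not lie on any shortest $s_0$-$s_1$ path, $D_e(t)\to0$ and $Q_e(t)\to 0$ as $t\to\infty$.
   Context: Let $G=(N,E)$ be a finite connected undirected graph with two distinct vertices $s_0$ (source) and $s_1$ (sink). Each edge $e$ has a fixed length $L_e>0$. Each edge has a time-dependent diameter $D_e(t)$ with $D_e(0)>0$, and resistance $R_e=L_e/D_e$. At each time $t$, the vertex potentials $p_v$ (normalized by $p_{s_1}=0$) are the solution of $\sum_{u\in\delta(v)}(p_v-p_u)/R_{uv}=b_v$ for all $v$, where $\delta(v)$ is the set of neighbours of $v$, $b_{s_0}=1$, $b_{s_1}=-1$, $b_v=0$ otherwise; for an edge $e=\{u,v\}$ with an arbitrarily fixed orientation $(u,v)$ the current is $Q_e=(p_u-p_v)/R_e=D_e(p_u-p_v)/L_e$. The diameters evolve by $\dot D_e(t)=|Q_e(t)|-D_e(t)$ for all $e\in E$ (the "Physarum dynamics"). The length of a path is the sum of $L_e$ over its edges. *)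

theory Defs
  imports "HOL-Analysis.Analysis"
begin

text \<open>A (multi)graph: vertex set N, edge set E, each edge e with a fixed
orientation from src e to tgt e.  A path is given by its vertex list vs and
edge list es (consecutive vertices joined by the corresponding edge, in either direction).\<close>

inductive gpath :: "'e set \<Rightarrow> ('e \<Rightarrow> 'v) \<Rightarrow> ('e \<Rightarrow> 'v) \<Rightarrow> 'v list \<Rightarrow> 'e list \<Rightarrow> bool"
  for E src tgt where
  nil: "gpath E src tgt [u] []"
| fwd: "e \<in> E \<Longrightarrow> src e = u \<Longrightarrow> gpath E src tgt (tgt e # vs) es
        \<Longrightarrow> gpath E src tgt (u # tgt e # vs) (e # es)"
| bwd: "e \<in> E \<Longrightarrow> tgt e = u \<Longrightarrow> gpath E src tgt (src e # vs) es
        \<Longrightarrow> gpath E src tgt (u # src e # vs) (e # es)"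

definition st_path :: "'e set \<Rightarrow> ('e \<Rightarrow> 'v) \<Rightarrow> ('e \<Rightarrow> 'v) \<Rightarrow> 'v \<Rightarrow> 'v \<Rightarrow> 'v list \<Rightarrow> 'e list \<Rightarrow> bool" where
  "st_path E src tgt x y vs es \<longleftrightarrow>
     gpath E src tgt vs es \<and> hd vs = x \<and> last vs = y \<and> distinct vs"

definition path_length :: "('e \<Rightarrow> real) \<Rightarrow> 'e list \<Rightarrow> real" where
  "path_length L es = (\<Sum>e\<leftarrow>es. L e)"

definition shortest_path :: "'e set \<Rightarrow> ('e \<Rightarrow> 'v) \<Rightarrow> ('e \<Rightarrow> 'v) \<Rightarrow> ('e \<Rightarrow> real) \<Rightarrow> 'v \<Rightarrow> 'v \<Rightarrow> 'v list \<Rightarrow> 'e list \<Rightarrow> bool" where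
  "shortest_path E src tgt L x y vs es \<longleftrightarrow>
     st_path E src tgt x y vs es \<and>
     (\<forall>vs' es'. st_path E src tgt x y vs' es' \<longrightarrow> path_length L es \<le> path_length L es')"

definition on_shortest_path :: "'e set \<Rightarrow> ('e \<Rightarrow> 'v) \<Rightarrow> ('e \<Rightarrow> 'v) \<Rightarrow> ('e \<Rightarrow> real) \<Rightarrow> 'v \<Rightarrow> 'v \<Rightarrow> 'e \<Rightarrow> bool" where
  "on_shortest_path E src tgt L x y e \<longleftrightarrow>
     (\<exists>vs es. shortest_path E src tgt L x y vs es \<and> e \<in> set es)"

definition phys_graph :: "'v set \<Rightarrow> 'e set \<Rightarrow> ('e \<Rightarrow> 'v) \<Rightarrow> ('e \<Rightarrow> 'v) \<Rightarrow> 'v \<Rightarrow> 'v \<Rightarrow> bool" where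
  "phys_graph N E src tgt s0 s1 \<longleftrightarrow>
     finite N \<and> finite E \<and>
     (\<forall>e\<in>E. src e \<in> N \<and> tgt e \<in> N \<and> src e \<noteq> tgt e) \<and>
     s0 \<in> N \<and> s1 \<in> N \<and> s0 \<noteq> s1 \<and>
     (\<forall>u\<in>N. \<forall>v\<in>N. \<exists>vs es. gpath E src tgt vs es \<and> hd vs = u \<and> last vs = v)"

definition supply_vec :: "'v \<Rightarrow> 'v \<Rightarrow> 'v \<Rightarrow> real" where
  "supply_vec s0 s1 v = (if v = s0 then 1 else if v = s1 then -1 else 0)"

definition current :: "('e \<Rightarrow> 'v) \<Rightarrow> ('e \<Rightarrow> 'v) \<Rightarrow> ('e \<Rightarrow> real) \<Rightarrow> ('e \<Rightarrow> real) \<Rightarrow> ('v \<Rightarrow> real) \<Rightarrow> 'e \<Rightarrow> real" where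
  "current src tgt L d pot e = d e * (pot (src e) - pot (tgt e)) / L e"

text \<open>pot are the normalized potentials for diameters d: Kirchhoff's equations
  sum over incident edges of (p_v - p_u)/R_e = b_v with R_e = L_e / d_e, and p_{s1} = 0.\<close>
definition potentials :: "'v set \<Rightarrow> 'e set \<Rightarrow> ('e \<Rightarrow> 'v) \<Rightarrow> ('e \<Rightarrow> 'v) \<Rightarrow> 'v \<Rightarrow> 'v \<Rightarrow>
    ('e \<Rightarrow> real) \<Rightarrow> ('e \<Rightarrow> real) \<Rightarrow> ('v \<Rightarrow> real) \<Rightarrow> bool" where
  "potentials N E src tgt s0 s1 L d pot \<longleftrightarrow>
     pot s1 = 0 \<and>
     (\<forall>v\<in>N. (\<Sum>e\<in>{e\<in>E. src e = v}. (pot v - pot (tgt e)) / (L e / d e))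
            + (\<Sum>e\<in>{e\<in>E. tgt e = v}. (pot v - pot (src e)) / (L e / d e))
            = supply_vec s0 s1 v)"

end

theory Submission
  imports Defs "HOL-Library.Multiset"
begin

text \<open>Let e0 lie on no shortest path and let P be a shortest s0-s1 path of length l.
  (1) Cut inequality: every simple path through e0 is strictly longer than l, so after
  shortening e0 by some small delta > 0 the shortest-path length is still l.  The distance to
  s1 under the shortened lengths is a potential that, paired with any electrical flow via
  Kirchhoff's law, shows cost = sum L_e |Q_e| >= l + delta |Q_e0|.
  (2) Along a trajectory, lyap = sum over P of L_e ln D_e - l ln V, with V = sum L_e D_e the
  volume, has derivative >= l delta |Q_e0| / V: telescoping along P bounds the energy by the
  potential drops on P, and Cauchy-Schwarz gives cost^2 <= energy * V.  Since lyap is bounded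
  above, the edges of P keep a fixed share of the volume; this bounds energy * V, hence the
  cost, hence V stays between positive constants.
  (3) lyap - kappa D_e0 is non-decreasing, bounded, and gains a fixed fraction of D_e0 t on
  [t, t + 1]; so D_e0 tends to 0, and Q_e0^2 <= D_e0 * energy / L_e0 gives Q_e0 -> 0.\<close>
text \<open>Monotonicity from a non-negative derivative, for derivatives taken within the
  half-line [0, \<infinity>) on which all trajectories live.\<close>
lemma nonneg_deriv_imp_mono_within:
  fixes g g' :: "real \<Rightarrow> real"
  assumes "0 \<le> a" "a \<le> b"
    and deriv: "\<And>t. a \<le> t \<Longrightarrow> t \<le> b \<Longrightarrow> (g has_real_derivative g' t) (at t within {0..})"
    and nonneg: "\<And>t. a < t \<Longrightarrow> t < b \<Longrightarrow> 0 \<le> g' t"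
  shows "g a \<le> g b"
proof (rule DERIV_nonneg_imp_increasing_open[OF \<open>a \<le> b\<close>])
  fix t assume t: "a < t" "t < b"
  have "at t within {0..} = at t"
    using t \<open>0 \<le> a\<close> by (intro at_within_interior) simp
  then show "\<exists>y. DERIV g t :> y \<and> 0 \<le> y"
    using deriv[of t] nonneg[OF t] t by auto
next
  show "continuous_on {a..b} g"
    by (rule DERIV_continuous_on[where D = g'], rule DERIV_subset[OF deriv]) (use assms(1) in auto)
qed

lemma relaxation_lower_bound:
  fixes g h :: "real \<Rightarrow> real"
  assumes "0 \<le> a" "a \<le> b"
    and deriv: "\<And>t. a \<le> t \<Longrightarrow> t \<le> b \<Longrightarrow> (g has_real_derivative h t - g t) (at t within {0..})"
    and ge: "\<And>t. a < t \<Longrightarrow> t < b \<Longrightarrow> C \<le> h t"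
  shows "(g a - C) * exp a \<le> (g b - C) * exp b"
proof (rule nonneg_deriv_imp_mono_within[OF assms(1,2), where g' = "\<lambda>t. (h t - C) * exp t"])
  fix t assume t: "a \<le> t" "t \<le> b"
  have "((\<lambda>t. (g t - C) * exp t) has_real_derivative (g t - C) * exp t + (h t - g t - 0) * exp t)
          (at t within {0..})"
    by (intro DERIV_mult' DERIV_diff deriv[OF t] DERIV_const has_field_derivative_at_within[OF DERIV_exp])
  then show "((\<lambda>t. (g t - C) * exp t) has_real_derivative (h t - C) * exp t) (at t within {0..})"
    by (rule DERIV_cong) (simp add: algebra_simps)
qed (use ge in simp)

lemma relaxation_upper_bound:
  fixes g h :: "real \<Rightarrow> real"
  assumes "0 \<le> a" "a \<le> b"
    and deriv: "\<And>t. a \<le> t \<Longrightarrow> t \<le> b \<Longrightarrow> (g has_real_derivative h t - g t) (at t within {0..})"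
    and le: "\<And>t. a < t \<Longrightarrow> t < b \<Longrightarrow> h t \<le> C"
  shows "(g b - C) * exp b \<le> (g a - C) * exp a"
proof -
  have "((\<lambda>t. - g t) a - - C) * exp a \<le> ((\<lambda>t. - g t) b - - C) * exp b"
  proof (rule relaxation_lower_bound[OF assms(1,2), where h = "\<lambda>t. - h t"])
    fix t assume "a \<le> t" "t \<le> b"
    then show "((\<lambda>t. - g t) has_real_derivative - h t - - g t) (at t within {0..})"
      using DERIV_minus[OF deriv] by simp
  qed (use le in simp)
  then show ?thesis by (simp add: algebra_simps)
qed

text \<open>A non-decreasing function bounded above converges, so its increments over
  intervals of length one tend to zero.\<close>
lemma bounded_mono_increments_tendsto_0:
  fixes M :: "real \<Rightarrow> real"
  assumes mono: "\<And>a b. 0 \<le> a \<Longrightarrow> a \<le> b \<Longrightarrow> M a \<le> M b"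
    and bounded: "\<And>t. 0 \<le> t \<Longrightarrow> M t \<le> B"
  shows "((\<lambda>t. M (t + 1) - M t) \<longlongrightarrow> 0) at_top"
  unfolding tendsto_iff eventually_at_top_linorder
proof (intro allI impI)
  fix \<epsilon> :: real assume "\<epsilon> > 0"
  define Ms where "Ms = Sup (M ` {0..})"
  have bdd: "bdd_above (M ` {0..})" using bounded by (intro bdd_aboveI[of _ B]) auto
  have below_Ms: "M t \<le> Ms" if "0 \<le> t" for t
    unfolding Ms_def by (rule cSup_upper[OF _ bdd]) (use that in auto)
  obtain T where T: "0 \<le> T" "Ms - \<epsilon> < M T"
    using less_cSup_iff[OF _ bdd, of "Ms - \<epsilon>"] \<open>\<epsilon> > 0\<close> unfolding Ms_def by auto
  have "dist (M (t + 1) - M t) 0 < \<epsilon>" if "T \<le> t" for t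
    using mono[OF T(1) that] mono[of t "t + 1"] below_Ms[of "t + 1"] T that
    by (simp add: dist_real_def)
  then show "\<exists>T. \<forall>t\<ge>T. dist (M (t + 1) - M t) 0 < \<epsilon>" by blast
qed

lemma DERIV_sum_list:
  fixes f :: "'a \<Rightarrow> real \<Rightarrow> real"
  shows "(\<And>x. x \<in> set xs \<Longrightarrow> (f x has_real_derivative f' x) (at t within S)) \<Longrightarrow>
    ((\<lambda>t. \<Sum>x\<leftarrow>xs. f x t) has_real_derivative (\<Sum>x\<leftarrow>xs. f' x)) (at t within S)"
  by (induct xs) (auto intro!: DERIV_add)

lemma sum_list_le_member:
  fixes f :: "'a \<Rightarrow> real"
  assumes "\<forall>x\<in>set xs. f x \<le> 0" "y \<in> set xs"
  shows "(\<Sum>x\<leftarrow>xs. f x) \<le> f y"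
  using assms
proof (induct xs)
  case (Cons a xs)
  have "(\<Sum>x\<leftarrow>xs. f x) \<le> 0" using Cons(2) by (intro sum_list_nonpos) auto
  then show ?case using Cons by (cases "y = a") auto
qed simp

lemma sum_list_mono_submset:
  fixes f :: "'a \<Rightarrow> real"
  assumes "mset xs \<subseteq># mset ys" "\<forall>y\<in>set ys. 0 \<le> f y"
  shows "(\<Sum>x\<leftarrow>xs. f x) \<le> (\<Sum>y\<leftarrow>ys. f y)"
proof -
  obtain C where C: "mset ys = mset xs + C" using assms(1) mset_subset_eq_exists_conv by blast
  have "\<forall>x\<in>#C. 0 \<le> f x" using assms(2) C by (metis Un_iff set_mset_mset set_mset_union)
  then have "0 \<le> (\<Sum>x\<in>#C. f x)" by (induct C) auto
  moreover have "(\<Sum>y\<leftarrow>ys. f y) = (\<Sum>x\<leftarrow>xs. f x) + (\<Sum>x\<in>#C. f x)"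
    by (metis C image_mset_union mset_map sum_mset.union sum_mset_sum_list)
  ultimately show ?thesis by linarith
qed

lemma gpath_nonempty: "gpath E src tgt vs es \<Longrightarrow> vs \<noteq> []"
  by (induct rule: gpath.induct) auto

lemma gpath_length: "gpath E src tgt vs es \<Longrightarrow> length vs = Suc (length es)"
  by (induct rule: gpath.induct) auto

lemma gpath_edges: "gpath E src tgt vs es \<Longrightarrow> set es \<subseteq> E"
  by (induct rule: gpath.induct) auto

lemma gpath_vertices:
  "gpath E src tgt vs es \<Longrightarrow> \<forall>e\<in>E. src e \<in> N \<and> tgt e \<in> N \<Longrightarrow> hd vs \<in> N \<Longrightarrow> set vs \<subseteq> N"
  by (induct rule: gpath.induct) auto

lemma gpath_tl:
  "gpath E src tgt (v # vs) es \<Longrightarrow> vs \<noteq> [] \<Longrightarrow> \<exists>e es'. es = e # es' \<and> gpath E src tgt vs es'"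
  by (cases rule: gpath.cases) auto

lemma gpath_drop:
  "gpath E src tgt (us @ vs) es \<Longrightarrow> vs \<noteq> [] \<Longrightarrow> gpath E src tgt vs (drop (length us) es)"
proof (induct us arbitrary: es)
  case (Cons u us)
  then obtain e es' where "es = e # es'" "gpath E src tgt (us @ vs) es'"
    using gpath_tl[of E src tgt u "us @ vs" es] by auto
  with Cons show ?case by simp
qed simp

lemma gpath_telescope:
  fixes f :: "'v \<Rightarrow> real"
  shows "gpath E src tgt vs es \<Longrightarrow> f (hd vs) - f (last vs) \<le> (\<Sum>e\<leftarrow>es. \<bar>f (src e) - f (tgt e)\<bar>)"
  by (induct rule: gpath.induct) auto

text \<open>Prepending an edge to a simple path: if the new vertex u already occurs on the path,
  cut the path back to u, otherwise extend it.\<close>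
lemma gpath_shortcut:
  assumes "gpath E src tgt vs' es'" "distinct vs'" "mset es' \<subseteq># mset es"
    and "e \<in> E" "hd vs' = w" "(src e = u \<and> tgt e = w) \<or> (tgt e = u \<and> src e = w)"
  shows "\<exists>vs'' es''. gpath E src tgt vs'' es'' \<and> hd vs'' = u \<and> last vs'' = last vs'
           \<and> distinct vs'' \<and> mset es'' \<subseteq># mset (e # es)"
proof (cases "u \<in> set vs'")
  case True
  then obtain us ws where split: "vs' = us @ u # ws" by (meson split_list)
  have "mset (drop (length us) es') \<subseteq># mset es'"
    by (metis append_take_drop_id mset_append mset_subset_eq_add_right)
  then have "mset (drop (length us) es') \<subseteq># mset (e # es)"
    using assms(3) by (simp add: subset_mset.order_trans)
  then show ?thesis
    using gpath_drop[of E src tgt us "u # ws" es'] assms(1,2) split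
    by (intro exI[of _ "u # ws"] exI[of _ "drop (length us) es'"]) auto
next
  case False
  obtain ws where ws: "vs' = w # ws" using gpath_nonempty[OF assms(1)] assms(5) by (cases vs') auto
  have "gpath E src tgt (u # vs') (e # es')"
    using assms(1,4,6) ws gpath.fwd[of e E src u tgt ws es'] gpath.bwd[of e E tgt u src ws es'] by auto
  then show ?thesis using assms(2,3) False ws
    by (intro exI[of _ "u # vs'"] exI[of _ "e # es'"]) auto
qed

text \<open>Every walk contains a simple path with the same end points whose edges form a
  sub-multiset of the walk's edges: cut out the cycle at each repeated vertex.\<close>
lemma gpath_simplify:
  "gpath E src tgt vs es \<Longrightarrow> \<exists>vs' es'. gpath E src tgt vs' es' \<and> hd vs' = hd vs \<and> last vs' = last vs
      \<and> distinct vs' \<and> mset es' \<subseteq># mset es"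
proof (induct rule: gpath.induct)
  case (nil u)
  show ?case by (intro exI[of _ "[u]"] exI[of _ "[]"]) (auto intro: gpath.nil)
next
  case (fwd e u vs es)
  then obtain vs' es' where "gpath E src tgt vs' es'" "hd vs' = tgt e" "last vs' = last (tgt e # vs)"
    "distinct vs'" "mset es' \<subseteq># mset es" by auto
  with gpath_shortcut[of E src tgt vs' es' es e "tgt e" u] fwd(1,2) show ?case by auto
next
  case (bwd e u vs es)
  then obtain vs' es' where "gpath E src tgt vs' es'" "hd vs' = src e" "last vs' = last (src e # vs)"
    "distinct vs'" "mset es' \<subseteq># mset es" by auto
  with gpath_shortcut[of E src tgt vs' es' es e "src e" u] bwd(1,2) show ?case by auto
qed


text \<open>Kirchhoff's law in weak form (Tellegen's theorem): for the current of a solution of the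
  node equations and any vertex function f, the f-drops along the edges weighted by the
  currents sum to f s0 - f s1, since the net outflow is the supply vector.\<close>
lemma kirchhoff_pairing:
  fixes f :: "'v \<Rightarrow> real"
  assumes fin: "finite N" "finite E" and ends: "\<forall>e\<in>E. src e \<in> N \<and> tgt e \<in> N"
    and terminals: "s0 \<in> N" "s1 \<in> N" "s0 \<noteq> s1"
    and pot: "potentials N E src tgt s0 s1 L d pot"
  shows "(\<Sum>e\<in>E. (f (src e) - f (tgt e)) * current src tgt L d pot e) = f s0 - f s1"
proof -
  let ?Q = "current src tgt L d pot"
  let ?out = "\<lambda>v. \<Sum>e\<in>{e\<in>E. src e = v}. ?Q e" and ?inn = "\<lambda>v. \<Sum>e\<in>{e\<in>E. tgt e = v}. ?Q e"
  have net_outflow: "?out v - ?inn v = supply_vec s0 s1 v" if "v \<in> N" for v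
  proof -
    have "(\<Sum>e\<in>{e\<in>E. src e = v}. (pot v - pot (tgt e)) / (L e / d e)) = ?out v"
      by (rule sum.cong) (auto simp: current_def)
    moreover have "(\<Sum>e\<in>{e\<in>E. tgt e = v}. (pot v - pot (src e)) / (L e / d e)) = - ?inn v"
      by (subst sum_negf[symmetric], rule sum.cong) (auto simp: current_def divide_simps algebra_simps)
    ultimately show ?thesis using pot that unfolding potentials_def by auto
  qed
  have by_vertex: "(\<Sum>e\<in>E. g (h e) * ?Q e) = (\<Sum>v\<in>N. g v * (\<Sum>e\<in>{e\<in>E. h e = v}. ?Q e))"
    if "\<forall>e\<in>E. h e \<in> N" for g h :: "_ \<Rightarrow> _"
  proof -
    have "(\<Sum>e\<in>E. g (h e) * ?Q e) = (\<Sum>v\<in>N. \<Sum>e\<in>{e\<in>E. h e = v}. g (h e) * ?Q e)"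
      by (rule sum.group[symmetric]) (use fin that in auto)
    then show ?thesis by (auto simp: sum_distrib_left intro!: sum.cong)
  qed
  have "(\<Sum>e\<in>E. (f (src e) - f (tgt e)) * ?Q e) = (\<Sum>v\<in>N. f v * (?out v - ?inn v))"
    using by_vertex[of src f] by_vertex[of tgt f] ends
    by (simp add: left_diff_distrib right_diff_distrib sum_subtractf)
  also have "\<dots> = (\<Sum>v\<in>N. (if v = s0 then f s0 else 0) - (if v = s1 then f s1 else 0))"
    using terminals(3) by (intro sum.cong) (auto simp: net_outflow supply_vec_def)
  also have "\<dots> = f s0 - f s1"
    using fin terminals by (simp add: sum_subtractf)
  finally show ?thesis .
qed

locale physarum_network =
  fixes N :: "'v set" and E :: "'e set" and src tgt :: "'e \<Rightarrow> 'v" and s0 s1 :: 'v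
    and L :: "'e \<Rightarrow> real"
  assumes graph: "phys_graph N E src tgt s0 s1"
    and len_pos: "\<forall>e\<in>E. L e > 0"
begin

lemma finite_N: "finite N" and finite_E: "finite E" and ends: "\<forall>e\<in>E. src e \<in> N \<and> tgt e \<in> N"
  and s0_in: "s0 \<in> N" and s1_in: "s1 \<in> N" and s0_ne_s1: "s0 \<noteq> s1"
  and connected: "\<forall>u\<in>N. \<forall>v\<in>N. \<exists>vs es. gpath E src tgt vs es \<and> hd vs = u \<and> last vs = v"
  using graph unfolding phys_graph_def by auto

lemma path_length_nonneg: "set es \<subseteq> E \<Longrightarrow> \<forall>e\<in>E. 0 \<le> w e \<Longrightarrow> 0 \<le> path_length w es"
  unfolding path_length_def by (induct es) auto

lemma st_path_edges_nonempty: "st_path E src tgt s0 s1 vs es \<Longrightarrow> es \<noteq> []"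
proof
  assume "st_path E src tgt s0 s1 vs es" "es = []"
  then obtain u where "vs = [u]" "hd vs = s0" "last vs = s1"
    using gpath_length[of E src tgt vs es] unfolding st_path_def by (cases vs) auto
  then show False using s0_ne_s1 by simp
qed

lemma st_path_length_pos: "st_path E src tgt s0 s1 vs es \<Longrightarrow> 0 < path_length L es"
proof -
  assume path: "st_path E src tgt s0 s1 vs es"
  then obtain e es' where "es = e # es'" using st_path_edges_nonempty by (cases es) auto
  moreover have "set es \<subseteq> E" using path gpath_edges unfolding st_path_def by blast
  ultimately show ?thesis
    using len_pos path_length_nonneg[of es' L] by (auto simp: path_length_def less_imp_le)
qed

lemma walk_to_st_path:
  assumes "gpath E src tgt vs es" "hd vs = s0" "last vs = s1"
  shows "\<exists>vs' es'. st_path E src tgt s0 s1 vs' es' \<and> mset es' \<subseteq># mset es"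
  using gpath_simplify[OF assms(1)] assms unfolding st_path_def by metis

definition st_paths :: "('v list \<times> 'e list) set" where
  "st_paths = {(vs, es). st_path E src tgt s0 s1 vs es}"

text \<open>Simple paths have at most |N| vertices, so there are only finitely many of them.\<close>
lemma finite_st_paths: "finite st_paths"
proof (rule finite_subset)
  show "st_paths \<subseteq> {vs. set vs \<subseteq> N \<and> length vs \<le> card N} \<times> {es. set es \<subseteq> E \<and> length es \<le> card N}"
  proof
    fix q assume "q \<in> st_paths"
    then obtain vs es where q: "q = (vs, es)" and path: "gpath E src tgt vs es" "hd vs = s0" "distinct vs"
      unfolding st_paths_def st_path_def by auto
    have vs_N: "set vs \<subseteq> N" using gpath_vertices[OF path(1)] ends s0_in path(2) by auto
    have "length vs \<le> card N" using distinct_card[OF path(3)] card_mono[OF finite_N vs_N] by simp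
    then show "q \<in> {vs. set vs \<subseteq> N \<and> length vs \<le> card N} \<times> {es. set es \<subseteq> E \<and> length es \<le> card N}"
      using q vs_N gpath_edges[OF path(1)] gpath_length[OF path(1)] by simp
  qed
  show "finite ({vs. set vs \<subseteq> N \<and> length vs \<le> card N} \<times> {es. set es \<subseteq> E \<and> length es \<le> card N})"
    using finite_lists_length_le[OF finite_N] finite_lists_length_le[OF finite_E] by blast
qed

lemma shortest_path_exists: "\<exists>vs es. shortest_path E src tgt L s0 s1 vs es"
proof -
  let ?len = "\<lambda>q. path_length L (snd q)"
  obtain vs es where "gpath E src tgt vs es" "hd vs = s0" "last vs = s1"
    using connected s0_in s1_in by blast
  then have "st_paths \<noteq> {}" using walk_to_st_path unfolding st_paths_def by blast
  then have "Min (?len ` st_paths) \<in> ?len ` st_paths" using finite_st_paths by (intro Min_in) auto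
  then obtain q where "q \<in> st_paths" "?len q = Min (?len ` st_paths)" by auto
  then have "q \<in> st_paths" "\<forall>q'\<in>st_paths. ?len q \<le> ?len q'" using finite_st_paths by auto
  then show ?thesis unfolding shortest_path_def st_paths_def by (cases q) auto
qed

end

context physarum_network
begin

context
  fixes x :: "'e \<Rightarrow> real" and p :: "'v \<Rightarrow> real"
  assumes pot: "potentials N E src tgt s0 s1 L x p" and x_pos: "\<forall>e\<in>E. 0 < x e"
begin

lemma energy_eq: "(\<Sum>e\<in>E. x e * (p (src e) - p (tgt e))\<^sup>2 / L e) = p s0"
proof -
  have "(\<Sum>e\<in>E. (p (src e) - p (tgt e)) * current src tgt L x p e) = p s0 - p s1"
    by (rule kirchhoff_pairing[OF finite_N finite_E ends s0_in s1_in s0_ne_s1 pot])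
  moreover have "p s1 = 0" using pot unfolding potentials_def by simp
  ultimately show ?thesis by (simp add: current_def power2_eq_square algebra_simps)
qed

lemma edge_energy_nonneg: "e \<in> E \<Longrightarrow> 0 \<le> x e * (p (src e) - p (tgt e))\<^sup>2 / L e"
  using x_pos len_pos by (simp add: less_imp_le)

lemma energy_nonneg: "0 \<le> p s0"
  unfolding energy_eq[symmetric] by (rule sum_nonneg) (rule edge_energy_nonneg)

lemma edge_energy_le: "e \<in> E \<Longrightarrow> x e * (p (src e) - p (tgt e))\<^sup>2 / L e \<le> p s0"
  unfolding energy_eq[symmetric] by (rule member_le_sum) (use edge_energy_nonneg finite_E in auto)

lemma abs_current_eq: "e \<in> E \<Longrightarrow> L e * \<bar>current src tgt L x p e\<bar> = x e * \<bar>p (src e) - p (tgt e)\<bar>"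
  using x_pos len_pos by (auto simp: current_def abs_mult abs_divide less_imp_le)

lemma current_sq_le: "e \<in> E \<Longrightarrow> (current src tgt L x p e)\<^sup>2 \<le> x e * p s0 / L e"
proof -
  assume e: "e \<in> E"
  have "(current src tgt L x p e)\<^sup>2 = x e / L e * (x e * (p (src e) - p (tgt e))\<^sup>2 / L e)"
    by (simp add: current_def power2_eq_square)
  also have "\<dots> \<le> x e / L e * p s0"
    using edge_energy_le[OF e] x_pos len_pos e by (intro mult_left_mono) (auto simp: less_imp_le)
  finally show ?thesis by simp
qed

text \<open>Cauchy-Schwarz: the transport cost is at most the geometric mean of energy and volume.\<close>
lemma cost_sq_le: "(\<Sum>e\<in>E. L e * \<bar>current src tgt L x p e\<bar>)\<^sup>2 \<le> p s0 * (\<Sum>e\<in>E. L e * x e)"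
proof -
  define a where "a e = sqrt (L e * x e)" for e
  define b where "b e = sqrt (x e / L e) * \<bar>p (src e) - p (tgt e)\<bar>" for e
  have "(\<Sum>e\<in>E. L e * \<bar>current src tgt L x p e\<bar>) = (\<Sum>e\<in>E. a e * b e)"
  proof (rule sum.cong)
    fix e assume e: "e \<in> E"
    have "sqrt (L e * x e) * sqrt (x e / L e) = sqrt (x e * x e)"
      unfolding real_sqrt_mult[symmetric] using len_pos e by (simp add: less_imp_neq[symmetric])
    then have "a e * b e = x e * \<bar>p (src e) - p (tgt e)\<bar>"
      using x_pos e by (simp add: a_def b_def less_imp_le)
    then show "L e * \<bar>current src tgt L x p e\<bar> = a e * b e"
      using abs_current_eq[OF e] by simp
  qed simp
  moreover have "(\<Sum>e\<in>E. (a e)\<^sup>2) = (\<Sum>e\<in>E. L e * x e)"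
    using len_pos x_pos by (intro sum.cong) (auto simp: a_def less_imp_le)
  moreover have "(\<Sum>e\<in>E. (b e)\<^sup>2) = p s0"
    unfolding energy_eq[symmetric] using len_pos x_pos
    by (intro sum.cong) (auto simp: b_def power_mult_distrib less_imp_le)
  ultimately show ?thesis using Cauchy_Schwarz_ineq_sum[of a b E] by (simp add: mult.commute)
qed

text \<open>Telescoping along an s0-s1 walk: the potential drops along the walk add up to at
  least p s0, because p s1 = 0.\<close>
lemma potential_drop_le:
  assumes "gpath E src tgt vs es" "hd vs = s0" "last vs = s1"
  shows "p s0 \<le> (\<Sum>e\<leftarrow>es. \<bar>p (src e) - p (tgt e)\<bar>)"
  using gpath_telescope[OF assms(1), of p] assms(2,3) pot unfolding potentials_def by simp

end

end

context physarum_network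
begin

lemma potential_drop_le_cost:
  assumes pot: "potentials N E src tgt s0 s1 L x p"
    and lipschitz: "\<forall>e\<in>E. \<bar>d (src e) - d (tgt e)\<bar> \<le> w e"
  shows "d s0 - d s1 \<le> (\<Sum>e\<in>E. w e * \<bar>current src tgt L x p e\<bar>)"
proof -
  have "d s0 - d s1 = (\<Sum>e\<in>E. (d (src e) - d (tgt e)) * current src tgt L x p e)"
    by (rule kirchhoff_pairing[OF finite_N finite_E ends s0_in s1_in s0_ne_s1 pot, symmetric])
  also have "\<dots> \<le> (\<Sum>e\<in>E. w e * \<bar>current src tgt L x p e\<bar>)"
  proof (rule sum_mono)
    fix e assume "e \<in> E"
    have "(d (src e) - d (tgt e)) * current src tgt L x p e
            \<le> \<bar>d (src e) - d (tgt e)\<bar> * \<bar>current src tgt L x p e\<bar>"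
      by (metis abs_ge_self abs_mult)
    also have "\<dots> \<le> w e * \<bar>current src tgt L x p e\<bar>"
      using lipschitz \<open>e \<in> E\<close> by (intro mult_right_mono) auto
    finally show "(d (src e) - d (tgt e)) * current src tgt L x p e \<le> w e * \<bar>current src tgt L x p e\<bar>" .
  qed
  finally show ?thesis .
qed

text \<open>Conversely, the w-distance to s1 is a w-Lipschitz vertex function whose drop from s0
  to s1 is at least any lower bound B on the w-lengths of simple s0-s1 paths.\<close>
lemma distance_potential_exists:
  assumes w_nonneg: "\<forall>e\<in>E. 0 \<le> w e"
    and lower: "\<And>vs es. st_path E src tgt s0 s1 vs es \<Longrightarrow> B \<le> path_length w es"
  shows "\<exists>d. (\<forall>e\<in>E. \<bar>d (src e) - d (tgt e)\<bar> \<le> w e) \<and> B \<le> d s0 - d s1"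
proof -
  define W where "W v = {path_length w es | vs es. gpath E src tgt vs es \<and> hd vs = v \<and> last vs = s1}" for v
  define d where "d v = Inf (W v)" for v
  have bdd: "bdd_below (W v)" for v
    unfolding W_def bdd_below_def using path_length_nonneg[OF gpath_edges w_nonneg] by blast
  have nonempty: "W v \<noteq> {}" if "v \<in> N" for v
    using connected that s1_in unfolding W_def by blast
  have "0 \<in> W s1"
    unfolding W_def by (rule CollectI, rule exI[of _ "[s1]"], rule exI[of _ "[]"])
      (auto simp: path_length_def intro: gpath.nil)
  then have d_s1: "d s1 \<le> 0" unfolding d_def by (rule cInf_lower[OF _ bdd])
  have d_s0: "B \<le> d s0"
    unfolding d_def
  proof (rule cInf_greatest[OF nonempty[OF s0_in]])
    fix l assume "l \<in> W s0"
    then obtain vs es where walk: "l = path_length w es" "gpath E src tgt vs es" "hd vs = s0" "last vs = s1"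
      unfolding W_def by blast
    then obtain vs' es' where path: "st_path E src tgt s0 s1 vs' es'" "mset es' \<subseteq># mset es"
      using walk_to_st_path by blast
    have "path_length w es' \<le> path_length w es"
      unfolding path_length_def
      by (rule sum_list_mono_submset[OF path(2)]) (use w_nonneg gpath_edges[OF walk(2)] in auto)
    then show "B \<le> l" using lower[OF path(1)] walk(1) by linarith
  qed
  have step: "d u \<le> w e + d v" if e: "e \<in> E" and uv: "(u = src e \<and> v = tgt e) \<or> (u = tgt e \<and> v = src e)" for e u v
  proof -
    have "d u - w e \<le> d v" unfolding d_def
    proof (rule cInf_greatest[OF nonempty])
      show "v \<in> N" using uv ends e by auto
    next
      fix l assume "l \<in> W v"
      then obtain vs es where walk: "l = path_length w es" "gpath E src tgt vs es" "hd vs = v" "last vs = s1"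
        unfolding W_def by blast
      obtain vs' where vs: "vs = v # vs'" using gpath_nonempty[OF walk(2)] walk(3) by (cases vs) auto
      have "gpath E src tgt (u # vs) (e # es)"
        using uv vs walk(2) e gpath.fwd[of e E src u tgt vs' es] gpath.bwd[of e E tgt u src vs' es] by auto
      then have "path_length w (e # es) \<in> W u"
        unfolding W_def using walk vs by (intro CollectI exI[of _ "u # vs"] exI[of _ "e # es"]) auto
      moreover have "path_length w (e # es) = w e + l" using walk(1) by (simp add: path_length_def)
      ultimately show "Inf (W u) - w e \<le> l" using cInf_lower[OF _ bdd, of "w e + l" u] by simp
    qed
    then show ?thesis by simp
  qed
  have "\<forall>e\<in>E. \<bar>d (src e) - d (tgt e)\<bar> \<le> w e"
    using step by (metis abs_le_iff add.commute diff_le_eq minus_diff_eq)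
  then show ?thesis using d_s0 d_s1 by (intro exI[of _ d]) auto
qed

lemma shortest_path_gap:
  assumes e0: "e0 \<in> E" "\<not> on_shortest_path E src tgt L s0 s1 e0"
    and shortest: "shortest_path E src tgt L s0 s1 vs es"
  shows "\<exists>\<delta>>0. \<delta> < L e0 \<and> (\<forall>vs' es'. st_path E src tgt s0 s1 vs' es' \<longrightarrow>
            path_length L es + \<delta> * count_list es' e0 \<le> path_length L es')"
proof -
  let ?len = "\<lambda>q. path_length L (snd q)"
  define G where "G = {q \<in> st_paths. e0 \<in> set (snd q)}"
  have finite_G: "finite G" using finite_st_paths G_def by auto
  have longer: "path_length L es < ?len q" if "q \<in> G" for q
  proof -
    obtain vs' es' where q: "q = (vs', es')" by (cases q)
    then have path: "st_path E src tgt s0 s1 vs' es'" "e0 \<in> set es'"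
      using that unfolding G_def st_paths_def by auto
    then have "\<not> shortest_path E src tgt L s0 s1 vs' es'" using e0(2) unfolding on_shortest_path_def by blast
    then obtain vs'' es'' where "st_path E src tgt s0 s1 vs'' es''" "path_length L es'' < path_length L es'"
      using path unfolding shortest_path_def by auto
    then show ?thesis using shortest q unfolding shortest_path_def by fastforce
  qed
  define \<delta> where "\<delta> = Min (insert (L e0 / 2) ((\<lambda>q. (?len q - path_length L es) / (length (snd q) + 1)) ` G))"
  have \<delta>_pos: "0 < \<delta>" unfolding \<delta>_def using finite_G longer len_pos e0(1) by auto
  have "\<delta> \<le> L e0 / 2" unfolding \<delta>_def using finite_G by (intro Min.coboundedI) auto
  then have \<delta>_less: "\<delta> < L e0" using len_pos e0(1) by auto
  have "path_length L es + \<delta> * count_list es' e0 \<le> path_length L es'"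
    if path: "st_path E src tgt s0 s1 vs' es'" for vs' es'
  proof (cases "e0 \<in> set es'")
    case False
    then show ?thesis using shortest path unfolding shortest_path_def by (simp add: count_list_0_iff)
  next
    case True
    then have "(vs', es') \<in> G" using path unfolding G_def st_paths_def by auto
    then have "\<delta> \<le> (path_length L es' - path_length L es) / (length es' + 1)"
      unfolding \<delta>_def using finite_G by (intro Min.coboundedI) force+
    then have "\<delta> * length es' + \<delta> \<le> path_length L es' - path_length L es" by (simp add: field_simps)
    moreover have "\<delta> * count_list es' e0 \<le> \<delta> * length es'"
      using \<delta>_pos count_le_length[of es' e0] by (intro mult_left_mono) auto
    ultimately show ?thesis using \<delta>_pos by linarith
  qed
  then show ?thesis using \<delta>_pos \<delta>_less by blast
qed

text \<open>Proof: shorten e0 by the gap and pair the flow with the resulting distance potential.\<close>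
lemma cut_inequality:
  assumes "e0 \<in> E" "\<not> on_shortest_path E src tgt L s0 s1 e0"
  obtains vs es \<delta> where "st_path E src tgt s0 s1 vs es" "0 < \<delta>"
    "\<And>x p. potentials N E src tgt s0 s1 L x p \<Longrightarrow>
       path_length L es + \<delta> * \<bar>current src tgt L x p e0\<bar> \<le> (\<Sum>e\<in>E. L e * \<bar>current src tgt L x p e\<bar>)"
proof -
  obtain vs es where shortest: "shortest_path E src tgt L s0 s1 vs es"
    using shortest_path_exists by blast
  obtain \<delta> where \<delta>: "0 < \<delta>" "\<delta> < L e0" and gap: "\<And>vs' es'. st_path E src tgt s0 s1 vs' es' \<Longrightarrow>
      path_length L es + \<delta> * count_list es' e0 \<le> path_length L es'"
    using shortest_path_gap[OF assms shortest] by blast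
  define w where "w e = L e - (if e = e0 then \<delta> else 0)" for e
  have w_length: "path_length w es' = path_length L es' - \<delta> * count_list es' e0" for es'
    by (induct es') (auto simp: path_length_def w_def algebra_simps)
  have "\<forall>e\<in>E. 0 \<le> w e" using len_pos \<delta> by (auto simp: w_def less_imp_le)
  then obtain d where lipschitz: "\<forall>e\<in>E. \<bar>d (src e) - d (tgt e)\<bar> \<le> w e"
    and drop: "path_length L es \<le> d s0 - d s1"
    using distance_potential_exists[of w "path_length L es"] gap unfolding w_length by fastforce
  have "path_length L es + \<delta> * \<bar>current src tgt L x p e0\<bar> \<le> (\<Sum>e\<in>E. L e * \<bar>current src tgt L x p e\<bar>)"
    if pot: "potentials N E src tgt s0 s1 L x p" for x p
  proof -
    let ?Q = "current src tgt L x p"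
    have "(\<Sum>e\<in>E. L e * \<bar>?Q e\<bar>) = (\<Sum>e\<in>E. w e * \<bar>?Q e\<bar> + (if e = e0 then \<delta> * \<bar>?Q e\<bar> else 0))"
      by (rule sum.cong) (auto simp: w_def algebra_simps)
    also have "\<dots> = (\<Sum>e\<in>E. w e * \<bar>?Q e\<bar>) + \<delta> * \<bar>?Q e0\<bar>"
      using finite_E assms(1) by (simp add: sum.distrib)
    finally
    show ?thesis using potential_drop_le_cost[OF pot lipschitz] drop by linarith
  qed
  then show thesis using that shortest \<delta> unfolding shortest_path_def by blast
qed

end

locale physarum_trajectory = physarum_network N E src tgt s0 s1 L
  for N :: "'v set" and E :: "'e set" and src tgt :: "'e \<Rightarrow> 'v" and s0 s1 :: 'v
    and L :: "'e \<Rightarrow> real" +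
  fixes D :: "'e \<Rightarrow> real \<Rightarrow> real" and p :: "real \<Rightarrow> 'v \<Rightarrow> real"
  assumes init_pos: "\<forall>e\<in>E. D e 0 > 0"
    and pot: "\<forall>t\<ge>0. potentials N E src tgt s0 s1 L (\<lambda>e. D e t) (p t)"
    and dyn: "\<forall>e\<in>E. \<forall>t\<ge>0. (D e has_real_derivative
                 (\<bar>current src tgt L (\<lambda>e'. D e' t) (p t) e\<bar> - D e t)) (at t within {0..})"
begin

definition Q :: "'e \<Rightarrow> real \<Rightarrow> real" where
  "Q e t = current src tgt L (\<lambda>e'. D e' t) (p t) e"

definition net_volume :: "real \<Rightarrow> real" where
  "net_volume t = (\<Sum>e\<in>E. L e * D e t)"

definition cost :: "real \<Rightarrow> real" where
  "cost t = (\<Sum>e\<in>E. L e * \<bar>Q e t\<bar>)"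

lemma D_deriv: "e \<in> E \<Longrightarrow> 0 \<le> t \<Longrightarrow> (D e has_real_derivative \<bar>Q e t\<bar> - D e t) (at t within {0..})"
  using dyn unfolding Q_def by blast

text \<open>Since |Q| \<ge> 0, D e t * exp t never decreases; in particular diameters stay positive.\<close>
lemma D_exp_mono:
  assumes "e \<in> E" "0 \<le> a" "a \<le> b"
  shows "D e a * exp a \<le> D e b * exp b"
proof -
  have "(D e a - 0) * exp a \<le> (D e b - 0) * exp b"
    by (rule relaxation_lower_bound[OF assms(2,3), where h = "\<lambda>t. \<bar>Q e t\<bar>"])
      (use D_deriv[OF assms(1)] assms(2) in auto)
  then show ?thesis by simp
qed

lemma D_pos: "e \<in> E \<Longrightarrow> 0 \<le> t \<Longrightarrow> 0 < D e t"
proof -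
  assume "e \<in> E" "0 \<le> t"
  then have "D e 0 \<le> D e t * exp t" "0 < D e 0"
    using D_exp_mono[of e 0 t] init_pos by auto
  then have "0 < D e t * exp t" by linarith
  then show ?thesis by (simp add: zero_less_mult_iff)
qed

lemma pot_at: "0 \<le> t \<Longrightarrow> potentials N E src tgt s0 s1 L (\<lambda>e. D e t) (p t)"
  using pot by blast

lemma diameters_pos: "0 \<le> t \<Longrightarrow> \<forall>e\<in>E. 0 < D e t"
  using D_pos by blast

lemma volume_deriv: "0 \<le> t \<Longrightarrow> (net_volume has_real_derivative cost t - net_volume t) (at t within {0..})"
proof -
  assume "0 \<le> t"
  then have "((\<lambda>t. \<Sum>e\<in>E. L e * D e t) has_real_derivative (\<Sum>e\<in>E. L e * (\<bar>Q e t\<bar> - D e t)))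
               (at t within {0..})"
    by (intro DERIV_sum DERIV_cmult D_deriv)
  moreover have "(\<Sum>e\<in>E. L e * (\<bar>Q e t\<bar> - D e t)) = cost t - net_volume t"
    unfolding cost_def net_volume_def by (simp add: right_diff_distrib sum_subtractf)
  ultimately show ?thesis unfolding net_volume_def[abs_def] by simp
qed

lemma edge_volume_le: "e \<in> E \<Longrightarrow> 0 \<le> t \<Longrightarrow> L e * D e t \<le> net_volume t"
  unfolding net_volume_def
  by (rule member_le_sum) (use finite_E D_pos len_pos in \<open>auto intro!: mult_nonneg_nonneg intro: less_imp_le\<close>)

lemma cost_sq_le_at: "0 \<le> t \<Longrightarrow> (cost t)\<^sup>2 \<le> p t s0 * net_volume t"
  using cost_sq_le[OF pot_at diameters_pos] unfolding cost_def net_volume_def Q_def .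

end

locale physarum_cut = physarum_trajectory N E src tgt s0 s1 L D p
  for N :: "'v set" and E :: "'e set" and src tgt :: "'e \<Rightarrow> 'v" and s0 s1 :: 'v
    and L :: "'e \<Rightarrow> real" and D :: "'e \<Rightarrow> real \<Rightarrow> real" and p :: "real \<Rightarrow> 'v \<Rightarrow> real" +
  fixes vs :: "'v list" and es :: "'e list" and e0 :: 'e and \<delta> :: real
  assumes path: "st_path E src tgt s0 s1 vs es"
    and e0_in: "e0 \<in> E"
    and \<delta>_pos: "0 < \<delta>"
    and cut: "\<And>t. 0 \<le> t \<Longrightarrow> path_length L es + \<delta> * \<bar>current src tgt L (\<lambda>e. D e t) (p t) e0\<bar>
                  \<le> (\<Sum>e\<in>E. L e * \<bar>current src tgt L (\<lambda>e. D e t) (p t) e\<bar>)"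
begin

text \<open>The length of the reference path (a shortest path in the application).\<close>
definition ref_len :: real where
  "ref_len = path_length L es"

lemma ref_len_pos: "0 < ref_len"
  unfolding ref_len_def by (rule st_path_length_pos[OF path])

lemma es_in_E: "e \<in> set es \<Longrightarrow> e \<in> E"
  using path gpath_edges unfolding st_path_def by blast

lemma cost_ge: "0 \<le> t \<Longrightarrow> ref_len + \<delta> * \<bar>Q e0 t\<bar> \<le> cost t"
  using cut unfolding ref_len_def cost_def Q_def by blast

lemma drop_sum_ge: "0 \<le> t \<Longrightarrow> p t s0 \<le> (\<Sum>e\<leftarrow>es. \<bar>p t (src e) - p t (tgt e)\<bar>)"
  using potential_drop_le[OF pot_at diameters_pos] path unfolding st_path_def by blast

text \<open>The Lyapunov function: the weighted log-diameters along the reference path compared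
  with the log of the network volume.  Its time derivative is lyap_rate.\<close>
definition lyap :: "real \<Rightarrow> real" where
  "lyap t = (\<Sum>e\<leftarrow>es. L e * ln (D e t)) - ref_len * ln (net_volume t)"

definition lyap_rate :: "real \<Rightarrow> real" where
  "lyap_rate t = (\<Sum>e\<leftarrow>es. \<bar>p t (src e) - p t (tgt e)\<bar>) - ref_len * cost t / net_volume t"

lemma net_volume_pos: "0 \<le> t \<Longrightarrow> 0 < net_volume t"
proof -
  assume t: "0 \<le> t"
  have "0 < L e0 * D e0 t" using D_pos[OF e0_in t] len_pos e0_in by simp
  then show ?thesis using edge_volume_le[OF e0_in t] by linarith
qed

lemma lyap_deriv: "0 \<le> t \<Longrightarrow> (lyap has_real_derivative lyap_rate t) (at t within {0..})"
proof -
  assume t: "0 \<le> t"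
  have "((\<lambda>t. \<Sum>e\<leftarrow>es. L e * ln (D e t)) has_real_derivative
          (\<Sum>e\<leftarrow>es. L e * (1 / D e t * (\<bar>Q e t\<bar> - D e t)))) (at t within {0..})"
    by (intro DERIV_sum_list DERIV_cmult DERIV_chain2[OF DERIV_ln_divide] D_pos D_deriv es_in_E t)
  moreover have "((\<lambda>t. ref_len * ln (net_volume t)) has_real_derivative
          ref_len * (1 / net_volume t * (cost t - net_volume t))) (at t within {0..})"
    by (intro DERIV_cmult DERIV_chain2[OF DERIV_ln_divide] net_volume_pos volume_deriv t)
  ultimately have deriv: "(lyap has_real_derivative
      (\<Sum>e\<leftarrow>es. L e * (1 / D e t * (\<bar>Q e t\<bar> - D e t)))
        - ref_len * (1 / net_volume t * (cost t - net_volume t))) (at t within {0..})"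
    unfolding lyap_def[abs_def] by (rule DERIV_diff)
  have "(\<Sum>e\<leftarrow>es. L e * (1 / D e t * (\<bar>Q e t\<bar> - D e t))) = (\<Sum>e\<leftarrow>es. \<bar>p t (src e) - p t (tgt e)\<bar> - L e)"
  proof (rule arg_cong[where f = sum_list], rule map_cong[OF refl])
    fix e assume "e \<in> set es"
    then have e: "e \<in> E" by (rule es_in_E)
    then have "L e * \<bar>Q e t\<bar> = D e t * \<bar>p t (src e) - p t (tgt e)\<bar>"
      using abs_current_eq[OF pot_at[OF t] diameters_pos[OF t]] unfolding Q_def by blast
    then show "L e * (1 / D e t * (\<bar>Q e t\<bar> - D e t)) = \<bar>p t (src e) - p t (tgt e)\<bar> - L e"
      using D_pos[OF e t] by (simp add: field_simps)
  qed
  also have "\<dots> = (\<Sum>e\<leftarrow>es. \<bar>p t (src e) - p t (tgt e)\<bar>) - ref_len"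
    unfolding ref_len_def path_length_def by (simp add: sum_list_subtractf)
  moreover have "ref_len * (1 / net_volume t * (cost t - net_volume t)) = ref_len * cost t / net_volume t - ref_len"
    using net_volume_pos[OF t] by (simp add: field_simps)
  ultimately show ?thesis using deriv unfolding lyap_rate_def by simp
qed

end

context physarum_cut
begin

text \<open>The decisive estimate: by Cauchy-Schwarz and the cut inequality, the Lyapunov function
  grows at least at a rate proportional to the current through e0.\<close>
lemma lyap_rate_ge: "0 \<le> t \<Longrightarrow> ref_len * \<delta> * \<bar>Q e0 t\<bar> / net_volume t \<le> lyap_rate t"
proof -
  assume t: "0 \<le> t"
  let ?V = "net_volume t" and ?S = "cost t"
  have V: "0 < ?V" by (rule net_volume_pos[OF t])
  have "?S\<^sup>2 / ?V \<le> p t s0" using cost_sq_le_at[OF t] V by (simp add: divide_le_eq mult.commute)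
  then have "?S * (?S - ref_len) / ?V \<le> lyap_rate t"
    using drop_sum_ge[OF t] unfolding lyap_rate_def
    by (simp add: power2_eq_square right_diff_distrib diff_divide_distrib mult.commute)
  moreover have "ref_len * (\<delta> * \<bar>Q e0 t\<bar>) \<le> ?S * (?S - ref_len)"
  proof -
    have gap: "\<delta> * \<bar>Q e0 t\<bar> \<le> ?S - ref_len" and "0 \<le> \<delta> * \<bar>Q e0 t\<bar>"
      using cost_ge[OF t] \<delta>_pos by auto
    then show ?thesis using ref_len_pos by (intro mult_mono) auto
  qed
  then have "ref_len * (\<delta> * \<bar>Q e0 t\<bar>) / ?V \<le> ?S * (?S - ref_len) / ?V"
    using V by (intro divide_right_mono) auto
  ultimately show ?thesis by (simp add: mult.assoc)
qed

lemma lyap_mono: "0 \<le> a \<Longrightarrow> a \<le> b \<Longrightarrow> lyap a \<le> lyap b"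
proof (rule nonneg_deriv_imp_mono_within[OF _ _ lyap_deriv])
  fix t assume "0 \<le> a" "a < t"
  then have "0 \<le> ref_len * \<delta> * \<bar>Q e0 t\<bar> / net_volume t"
    using ref_len_pos \<delta>_pos net_volume_pos[of t] by simp
  then show "0 \<le> lyap_rate t" using lyap_rate_ge[of t] \<open>a < t\<close> \<open>0 \<le> a\<close> by linarith
qed auto

definition log_len_sum :: real where
  "log_len_sum = (\<Sum>e\<leftarrow>es. L e * ln (L e))"

text \<open>Up to a constant, lyap is a weighted sum of logarithms of the volume shares
  L e * D e t / net_volume t of the path edges; shares are at most 1.\<close>
lemma lyap_eq_shares:
  "0 \<le> t \<Longrightarrow> lyap t + log_len_sum = (\<Sum>e\<leftarrow>es. L e * ln (L e * D e t / net_volume t))"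
proof -
  assume t: "0 \<le> t"
  have "(\<Sum>e\<leftarrow>es. L e * ln (L e * D e t / net_volume t))
          = (\<Sum>e\<leftarrow>es. L e * ln (D e t) + L e * ln (L e) - L e * ln (net_volume t))"
  proof (rule arg_cong[where f = sum_list], rule map_cong[OF refl])
    fix e assume "e \<in> set es"
    then have "0 < L e" "0 < D e t" using es_in_E len_pos D_pos[OF _ t] by auto
    then show "L e * ln (L e * D e t / net_volume t) = L e * ln (D e t) + L e * ln (L e) - L e * ln (net_volume t)"
      using net_volume_pos[OF t] by (simp add: ln_div ln_mult algebra_simps)
  qed
  then show ?thesis
    unfolding lyap_def log_len_sum_def ref_len_def path_length_def
    by (simp add: sum_list_subtractf sum_list_addf sum_list_mult_const)
qed

lemma log_share_nonpos: "e \<in> set es \<Longrightarrow> 0 \<le> t \<Longrightarrow> L e * ln (L e * D e t / net_volume t) \<le> 0"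
proof -
  assume "e \<in> set es" "0 \<le> t"
  then have "0 < L e" "0 < L e * D e t" "L e * D e t \<le> net_volume t"
    using es_in_E len_pos D_pos edge_volume_le by auto
  then have "ln (L e * D e t / net_volume t) \<le> 0" using net_volume_pos[OF \<open>0 \<le> t\<close>] by simp
  then show ?thesis using \<open>0 < L e\<close> by (simp add: mult_nonneg_nonpos)
qed

lemma lyap_le: "0 \<le> t \<Longrightarrow> lyap t \<le> - log_len_sum"
proof -
  assume t: "0 \<le> t"
  have "(\<Sum>e\<leftarrow>es. L e * ln (L e * D e t / net_volume t)) \<le> 0"
    by (rule sum_list_nonpos) (use log_share_nonpos t in auto)
  then show ?thesis using lyap_eq_shares[OF t] by linarith
qed

text \<open>Since lyap never decreases, the volume share of each edge of the reference path stays
  bounded away from zero.\<close>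
definition share_bound :: "'e \<Rightarrow> real" where
  "share_bound e = exp ((lyap 0 + log_len_sum) / L e)"

lemma share_bound_pos: "0 < share_bound e"
  unfolding share_bound_def by simp

lemma share_lower: "e \<in> set es \<Longrightarrow> 0 \<le> t \<Longrightarrow> share_bound e * net_volume t \<le> L e * D e t"
proof -
  assume e: "e \<in> set es" and t: "0 \<le> t"
  have pos: "0 < L e" "0 < D e t" using es_in_E[OF e] len_pos D_pos[OF _ t] by auto
  have "lyap 0 + log_len_sum \<le> lyap t + log_len_sum" using lyap_mono[OF order_refl t] by simp
  also have "\<dots> \<le> L e * ln (L e * D e t / net_volume t)"
    unfolding lyap_eq_shares[OF t] by (rule sum_list_le_member[OF _ e]) (use log_share_nonpos t in auto)
  finally have "share_bound e \<le> exp (ln (L e * D e t / net_volume t))"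
    unfolding share_bound_def using pos by (simp add: divide_le_eq mult.commute)
  then show ?thesis using pos net_volume_pos[OF t] by (simp add: field_simps)
qed

end

context physarum_cut
begin

text \<open>A uniform bound on the transport cost, obtained from the lower bounds on the
  diameters of the reference path.\<close>
definition cost_bound :: real where
  "cost_bound = (\<Sum>e\<leftarrow>es. L e / sqrt (share_bound e))"

lemma cost_bound_nonneg: "0 \<le> cost_bound"
  unfolding cost_bound_def using es_in_E len_pos share_bound_pos
  by (intro sum_list_nonneg) (auto intro: less_imp_le)

text \<open>On a path edge the diameter is a definite fraction of the volume, so the potential drop
  is bounded in terms of the energy per volume.\<close>
lemma drop_le:
  assumes e: "e \<in> set es" and t: "0 \<le> t"
  shows "\<bar>p t (src e) - p t (tgt e)\<bar> \<le> sqrt (p t s0 / net_volume t) * (L e / sqrt (share_bound e))"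
proof (rule power2_le_imp_le)
  have pos: "0 < L e" "0 < D e t" "0 < share_bound e" "0 < net_volume t"
    using es_in_E[OF e] len_pos D_pos[OF _ t] share_bound_pos net_volume_pos[OF t] by auto
  have energy: "0 \<le> p t s0" by (rule energy_nonneg[OF pot_at[OF t] diameters_pos[OF t]])
  have "(p t (src e) - p t (tgt e))\<^sup>2 \<le> p t s0 * L e / D e t"
    using edge_energy_le[OF pot_at[OF t] diameters_pos[OF t] es_in_E[OF e]] pos
    by (simp add: field_simps)
  also have "\<dots> \<le> p t s0 * L e / (share_bound e * net_volume t / L e)"
    using share_lower[OF e t] pos energy by (intro divide_left_mono) (auto simp: field_simps)
  also have "\<dots> = p t s0 / net_volume t * (L e)\<^sup>2 / share_bound e"
    using pos by (simp add: field_simps power2_eq_square)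
  also have "\<dots> = (sqrt (p t s0 / net_volume t) * (L e / sqrt (share_bound e)))\<^sup>2"
    using pos energy by (simp add: power_mult_distrib power_divide)
  finally show "\<bar>p t (src e) - p t (tgt e)\<bar>\<^sup>2 \<le> (sqrt (p t s0 / net_volume t) * (L e / sqrt (share_bound e)))\<^sup>2"
    by simp
  show "0 \<le> sqrt (p t s0 / net_volume t) * (L e / sqrt (share_bound e))"
    using pos energy by simp
qed

lemma energy_volume_le: "0 \<le> t \<Longrightarrow> p t s0 * net_volume t \<le> cost_bound\<^sup>2"
proof -
  assume t: "0 \<le> t"
  define a where "a = sqrt (p t s0 / net_volume t)"
  have V: "0 < net_volume t" by (rule net_volume_pos[OF t])
  have P: "0 \<le> p t s0" by (rule energy_nonneg[OF pot_at[OF t] diameters_pos[OF t]])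
  have a: "0 \<le> a" using P V by (simp add: a_def)
  have energy: "p t s0 = a\<^sup>2 * net_volume t" using P V by (simp add: a_def)
  have "p t s0 \<le> (\<Sum>e\<leftarrow>es. \<bar>p t (src e) - p t (tgt e)\<bar>)" by (rule drop_sum_ge[OF t])
  also have "\<dots> \<le> (\<Sum>e\<leftarrow>es. a * (L e / sqrt (share_bound e)))"
    by (rule sum_list_mono) (use drop_le t in \<open>simp add: a_def\<close>)
  also have "\<dots> = a * cost_bound" unfolding cost_bound_def by (rule sum_list_const_mult)
  finally have "a * (a * net_volume t) \<le> a * cost_bound" using energy by (simp add: power2_eq_square)
  show ?thesis
  proof (cases "a = 0")
    case False
    then have "0 < a" using a by simp
    then have "a * net_volume t \<le> cost_bound"
      using \<open>a * (a * net_volume t) \<le> a * cost_bound\<close> by simp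
    then have "(a * net_volume t)\<^sup>2 \<le> cost_bound\<^sup>2"
      using V \<open>0 < a\<close> by (intro power_mono) auto
    then show ?thesis using energy by (simp add: power2_eq_square algebra_simps)
  qed (use energy cost_bound_nonneg in simp)
qed

lemma cost_le: "0 \<le> t \<Longrightarrow> cost t \<le> cost_bound"
proof (rule power2_le_imp_le[OF _ cost_bound_nonneg])
  assume "0 \<le> t"
  then show "(cost t)\<^sup>2 \<le> cost_bound\<^sup>2" using cost_sq_le_at energy_volume_le by (metis order.trans)
qed

text \<open>Since volume' = cost - volume, the volume stays between the bounds for the cost.\<close>
definition vol_max :: real where "vol_max = max (net_volume 0) cost_bound"
definition vol_min :: real where "vol_min = min (net_volume 0) ref_len"

lemma volume_le: "0 \<le> t \<Longrightarrow> net_volume t \<le> vol_max"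
proof -
  assume t: "0 \<le> t"
  have "(net_volume t - vol_max) * exp t \<le> (net_volume 0 - vol_max) * exp 0"
  proof (rule relaxation_upper_bound[OF order_refl t volume_deriv])
    fix s :: real assume "0 < s"
    then show "cost s \<le> vol_max" using cost_le[of s] unfolding vol_max_def by simp
  qed
  also have "\<dots> \<le> 0" by (simp add: vol_max_def)
  finally show ?thesis by (simp add: mult_le_0_iff)
qed

lemma volume_ge: "0 \<le> t \<Longrightarrow> vol_min \<le> net_volume t"
proof -
  assume t: "0 \<le> t"
  have "0 \<le> (net_volume 0 - vol_min) * exp 0" by (simp add: vol_min_def)
  also have "\<dots> \<le> (net_volume t - vol_min) * exp t"
  proof (rule relaxation_lower_bound[OF order_refl t volume_deriv])
    fix s :: real assume "0 < s"
    moreover have "0 \<le> \<delta> * \<bar>Q e0 s\<bar>" using \<delta>_pos by simp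
    ultimately have "ref_len \<le> cost s" using cost_ge[of s] by linarith
    then show "vol_min \<le> cost s" unfolding vol_min_def by simp
  qed
  finally show ?thesis by (simp add: zero_le_mult_iff)
qed

lemma vol_min_pos: "0 < vol_min"
  unfolding vol_min_def using net_volume_pos[of 0] ref_len_pos by simp

end

context physarum_cut
begin

text \<open>Subtracting a small multiple of D e0 from lyap gives a function that is still
  non-decreasing, with rate at least proportional to D e0; it is bounded, hence D e0 must
  vanish in the limit.\<close>
definition \<kappa> :: real where
  "\<kappa> = ref_len * \<delta> / vol_max"

definition lyap_e0 :: "real \<Rightarrow> real" where
  "lyap_e0 t = lyap t - \<kappa> * D e0 t"

lemma \<kappa>_pos: "0 < \<kappa>"
  unfolding \<kappa>_def using ref_len_pos \<delta>_pos net_volume_pos[of 0] by (simp add: vol_max_def)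

lemma lyap_e0_deriv:
  "0 \<le> t \<Longrightarrow> (lyap_e0 has_real_derivative lyap_rate t - \<kappa> * (\<bar>Q e0 t\<bar> - D e0 t)) (at t within {0..})"
  unfolding lyap_e0_def[abs_def] by (intro DERIV_diff lyap_deriv DERIV_cmult D_deriv e0_in)

lemma lyap_e0_rate_ge: "0 \<le> t \<Longrightarrow> \<kappa> * D e0 t \<le> lyap_rate t - \<kappa> * (\<bar>Q e0 t\<bar> - D e0 t)"
proof -
  assume t: "0 \<le> t"
  have "\<kappa> * \<bar>Q e0 t\<bar> = ref_len * \<delta> * \<bar>Q e0 t\<bar> / vol_max" unfolding \<kappa>_def by simp
  also have "\<dots> \<le> ref_len * \<delta> * \<bar>Q e0 t\<bar> / net_volume t"
    using volume_le[OF t] net_volume_pos[OF t] ref_len_pos \<delta>_pos by (intro divide_left_mono) auto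
  also have "\<dots> \<le> lyap_rate t" by (rule lyap_rate_ge[OF t])
  finally show ?thesis by (simp add: algebra_simps)
qed

lemma lyap_e0_mono: "0 \<le> a \<Longrightarrow> a \<le> b \<Longrightarrow> lyap_e0 a \<le> lyap_e0 b"
proof (rule nonneg_deriv_imp_mono_within[OF _ _ lyap_e0_deriv])
  fix t assume "0 \<le> a" "a < t"
  then have t: "0 \<le> t" by simp
  have "0 \<le> \<kappa> * D e0 t" using \<kappa>_pos D_pos[OF e0_in t] by simp
  then show "0 \<le> lyap_rate t - \<kappa> * (\<bar>Q e0 t\<bar> - D e0 t)" using lyap_e0_rate_ge[OF t] by linarith
qed auto

lemma lyap_e0_le: "0 \<le> t \<Longrightarrow> lyap_e0 t \<le> - log_len_sum"
proof -
  assume t: "0 \<le> t"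
  have "0 \<le> \<kappa> * D e0 t" using \<kappa>_pos D_pos[OF e0_in t] by simp
  then show ?thesis using lyap_le[OF t] unfolding lyap_e0_def by linarith
qed

text \<open>Since D e0 decays at most exponentially, a diameter D e0 t0 forces an increase of
  lyap_e0 over [t0, t0 + 1] by a fixed fraction of it.\<close>
lemma lyap_e0_increment:
  assumes t0: "0 \<le> t0"
  shows "\<kappa> * (1 - exp (- 1)) * D e0 t0 \<le> lyap_e0 (t0 + 1) - lyap_e0 t0"
proof -
  define C where "C = \<kappa> * D e0 t0 * exp t0"
  have "lyap_e0 t0 + C * exp (- t0) \<le> lyap_e0 (t0 + 1) + C * exp (- (t0 + 1))"
  proof (rule nonneg_deriv_imp_mono_within[OF t0, where g' = "\<lambda>s. (lyap_rate s - \<kappa> * (\<bar>Q e0 s\<bar> - D e0 s)) - C * exp (- s)"])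
    fix s assume s: "t0 \<le> s"
    have "((\<lambda>s. exp (- s)) has_real_derivative exp (- s) * (- 1)) (at s within {0..})"
      by (rule DERIV_chain2[OF DERIV_exp DERIV_minus[OF DERIV_ident]])
    then show "((\<lambda>s. lyap_e0 s + C * exp (- s)) has_real_derivative
        (lyap_rate s - \<kappa> * (\<bar>Q e0 s\<bar> - D e0 s)) - C * exp (- s)) (at s within {0..})"
      using lyap_e0_deriv[of s] s t0 by (auto intro!: derivative_eq_intros)
  next
    fix s assume s: "t0 < s"
    then have "D e0 t0 * exp t0 \<le> D e0 s * exp s" using D_exp_mono[OF e0_in t0] by simp
    then have "D e0 t0 * exp t0 * exp (- s) \<le> D e0 s"
      by (simp add: exp_minus field_simps)
    then have "C * exp (- s) \<le> \<kappa> * D e0 s"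
      unfolding C_def using \<kappa>_pos by (simp add: mult.assoc mult_left_mono)
    then show "0 \<le> lyap_rate s - \<kappa> * (\<bar>Q e0 s\<bar> - D e0 s) - C * exp (- s)"
      using lyap_e0_rate_ge[of s] s t0 by linarith
  qed simp
  moreover have "C * exp (- t0) = \<kappa> * D e0 t0"
    unfolding C_def by (simp add: exp_minus)
  moreover have "C * exp (- (t0 + 1)) = \<kappa> * D e0 t0 * exp (- 1)"
    unfolding C_def by (simp add: mult.assoc exp_add[symmetric])
  ultimately show ?thesis by (simp add: algebra_simps)
qed

theorem D_e0_tendsto_0: "((\<lambda>t. D e0 t) \<longlongrightarrow> 0) at_top"
proof (rule Lim_null_comparison)
  have "((\<lambda>t. lyap_e0 (t + 1) - lyap_e0 t) \<longlongrightarrow> 0) at_top"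
    by (rule bounded_mono_increments_tendsto_0[OF lyap_e0_mono lyap_e0_le])
  then show "((\<lambda>t. (lyap_e0 (t + 1) - lyap_e0 t) / (\<kappa> * (1 - exp (- 1)))) \<longlongrightarrow> 0) at_top"
    by (rule tendsto_divide_zero)
  have "0 < \<kappa> * (1 - exp (- 1))" using \<kappa>_pos by simp
  then have bound: "norm (D e0 t) \<le> (lyap_e0 (t + 1) - lyap_e0 t) / (\<kappa> * (1 - exp (- 1)))"
    if "0 \<le> t" for t
    using lyap_e0_increment[OF that] D_pos[OF e0_in that] by (simp add: pos_le_divide_eq mult.commute)
  show "\<forall>\<^sub>F t in at_top. norm (D e0 t) \<le> (lyap_e0 (t + 1) - lyap_e0 t) / (\<kappa> * (1 - exp (- 1)))"
    by (rule eventually_at_top_linorderI[of 0]) (rule bound)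
qed

text \<open>The current through e0 is controlled by D e0 and the energy, which stays bounded.\<close>
theorem Q_e0_tendsto_0: "((\<lambda>t. Q e0 t) \<longlongrightarrow> 0) at_top"
proof (rule Lim_null_comparison)
  define K where "K = cost_bound\<^sup>2 / (vol_min * L e0)"
  have "0 < L e0" using len_pos e0_in by simp
  then have K: "0 \<le> K" unfolding K_def using vol_min_pos by simp
  have bound: "\<bar>Q e0 t\<bar> \<le> sqrt (K * D e0 t)" if t: "0 \<le> t" for t
  proof (rule real_le_rsqrt)
    have "p t s0 * vol_min \<le> cost_bound\<^sup>2"
      using energy_volume_le[OF t] volume_ge[OF t]
        energy_nonneg[OF pot_at[OF t] diameters_pos[OF t]] by (meson mult_left_mono order.trans)
    then have "p t s0 / L e0 \<le> K"
      unfolding K_def using vol_min_pos \<open>0 < L e0\<close> by (simp add: field_simps)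
    then have "D e0 t * (p t s0 / L e0) \<le> D e0 t * K"
      using D_pos[OF e0_in t] by (intro mult_left_mono) auto
    then show "\<bar>Q e0 t\<bar>\<^sup>2 \<le> K * D e0 t"
      using current_sq_le[OF pot_at[OF t] diameters_pos[OF t] e0_in] unfolding Q_def
      by (simp add: mult.commute)
  qed
  show "\<forall>\<^sub>F t in at_top. norm (Q e0 t) \<le> sqrt (K * D e0 t)"
    by (rule eventually_at_top_linorderI[of 0]) (simp add: bound)
  show "((\<lambda>t. sqrt (K * D e0 t)) \<longlongrightarrow> 0) at_top"
    using tendsto_real_sqrt[OF tendsto_mult_right_zero[OF D_e0_tendsto_0, of K]] by simp
qed

end

theorem mainTheorem7:
  fixes N :: "'v set" and E :: "'e set" and src tgt :: "'e \<Rightarrow> 'v" and s0 s1 :: 'v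
    and L :: "'e \<Rightarrow> real" and D :: "'e \<Rightarrow> real \<Rightarrow> real" and p :: "real \<Rightarrow> 'v \<Rightarrow> real"
  assumes graph: "phys_graph N E src tgt s0 s1"
    and len_pos: "\<forall>e\<in>E. L e > 0"
    and init_pos: "\<forall>e\<in>E. D e 0 > 0"
    and pot: "\<forall>t\<ge>0. potentials N E src tgt s0 s1 L (\<lambda>e. D e t) (p t)"
    and dyn: "\<forall>e\<in>E. \<forall>t\<ge>0. (D e has_real_derivative
                 (\<bar>current src tgt L (\<lambda>e'. D e' t) (p t) e\<bar> - D e t)) (at t within {0..})"
    and e_in: "e \<in> E"
    and not_short: "\<not> on_shortest_path E src tgt L s0 s1 e"
  shows "((\<lambda>t. D e t) \<longlongrightarrow> 0) at_top \<and>
         ((\<lambda>t. current src tgt L (\<lambda>e'. D e' t) (p t) e) \<longlongrightarrow> 0) at_top"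
proof -
  interpret physarum_trajectory N E src tgt s0 s1 L D p
    by unfold_locales (use graph len_pos init_pos pot dyn in auto)
  obtain vs es \<delta> where "st_path E src tgt s0 s1 vs es" "0 < \<delta>"
    and "\<And>x q. potentials N E src tgt s0 s1 L x q \<Longrightarrow>
       path_length L es + \<delta> * \<bar>current src tgt L x q e\<bar> \<le> (\<Sum>e'\<in>E. L e' * \<bar>current src tgt L x q e'\<bar>)"
    using cut_inequality[OF e_in not_short] by blast
  then interpret physarum_cut N E src tgt s0 s1 L D p vs es e \<delta>
    by unfold_locales (use e_in pot in auto)
  show ?thesis using D_e0_tendsto_0 Q_e0_tendsto_0 unfolding Q_def by simp
qed

end
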